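(* Let $A \in \mathbb{C}^{n\times n}$ and let $f(z)=\det(zI-A)$. Let $(\Gamma)$ be a closed piecewise $C^1$ Jordan curve in $\mathbb{C}$ containing no eigenvalue of $A$, and fix an origin $z_0\in(\Gamma)$. Let $\arg_0$ denote the continuous determination of the argument of $f$ along $(\Gamma)$ (i.e. the branch of $\arg(f(z))$, $z\in(\Gamma)$, obtained by continuously following $z$ along $(\Gamma)$) normalized by $\arg_0(f(z_0))=\mathrm{Arg}(f(z_0))$. For $z$ not an eigenvalue of $A$ let $R(z)=(zI-A)^{-1}$ and $\Phi_z(s)=\det(I+sR(z))$. Let $z$ and $h$ be such that the segment $[z,z+h]\subset(\Gamma)$. If $$|\mathrm{Arg}(\Phi_z(s))|<\pi \quad \text{for all } s\in[0,h]$$ (where $s\in[0,h]$ means $s=th$, $t\in[0,1]$), then $$\arg_0(f(z+h))=\arg_0(f(z))+\mathrm{Arg}(\Phi_z(h)).$$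
   Context: $\mathrm{Arg}(w)\in(-\pi,\pi]$ denotes the principal determination of the argument of a nonzero complex number $w$. Note that $f(z+h)=f(z)\,\Phi_z(h)$. *)

theory Defs
  imports "HOL-Complex_Analysis.Complex_Analysis"
begin

definition charf :: "complex^'n^'n \<Rightarrow> complex \<Rightarrow> complex" where
  "charf A z = det (mat z - A)"

definition resolvent :: "complex^'n^'n \<Rightarrow> complex \<Rightarrow> complex^'n^'n" where
  "resolvent A z = matrix_inv (mat z - A)"

definition Phi :: "complex^'n^'n \<Rightarrow> complex \<Rightarrow> complex \<Rightarrow> complex" where
  "Phi A z s = det (mat 1 + mat s ** resolvent A z)"

definition is_arg0 :: "complex^'n^'n \<Rightarrow> (real \<Rightarrow> complex) \<Rightarrow> (real \<Rightarrow> real) \<Rightarrow> bool" where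
  "is_arg0 A g \<theta> \<longleftrightarrow> continuous_on {0..1} \<theta> \<and>
     (\<forall>t\<in>{0..1}. charf A (g t) = of_real (norm (charf A (g t))) * exp (\<i> * of_real (\<theta> t))) \<and>
     \<theta> 0 = Arg (charf A (g 0))"

end

theory Submission
  imports Defs
begin

text \<open>Since f(z + s) = f(z) Phi_z(s), along the segment the quotient f / f(z) takes the values
  Phi_z(s), s \<in> [0,h], which avoid the closed negative real axis by hypothesis. Hence
  arg_0(f(z)) + Arg(f / f(z)) is a second continuous determination of the argument of f on the
  segment. Two continuous determinations differ by a continuous function with values in
  2 pi \<int>, hence by a constant on the connected parameter interval, and they agree at z.\<close>

lemma mat_add: "mat (x + y) = (mat x + mat y :: 'a::monoid_add^'n^'n)"
  by (simp add: mat_def vec_eq_iff)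

lemma matrix_add_rdistrib:
  fixes A :: "'a::semiring_1^'p^'n" and B C :: "'a^'n^'m"
  shows "(B + C) ** A = B ** A + C ** A"
  by (vector matrix_matrix_mult_def sum.distrib[symmetric] field_simps)

lemma not_nonpos_Reals_if_abs_Arg_less_pi:
  assumes "w \<noteq> 0" "\<bar>Arg w\<bar> < pi"
  shows "w \<notin> \<real>\<^sub>\<le>\<^sub>0"
proof
  assume "w \<in> \<real>\<^sub>\<le>\<^sub>0"
  then have "Arg w = pi"
    using assms(1) by (auto simp: Arg_eq_pi complex_nonpos_Reals_iff complex_eq_iff)
  then show False
    using assms(2) by simp
qed

lemma phase_lifts_eq:
  fixes \<theta> \<phi> :: "'a::topological_space \<Rightarrow> real"
  assumes "connected S" "continuous_on S \<theta>" "continuous_on S \<phi>"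
    and phase: "\<And>t. t \<in> S \<Longrightarrow> exp (\<i> * of_real (\<theta> t)) = exp (\<i> * of_real (\<phi> t))"
    and "a \<in> S" "b \<in> S" "\<theta> a = \<phi> a"
  shows "\<theta> b = \<phi> b"
proof -
  have multiple: "\<exists>n::int. \<theta> t - \<phi> t = 2 * pi * n" if t: "t \<in> S" for t
  proof -
    obtain n :: int where "\<i> * of_real (\<theta> t) = \<i> * of_real (\<phi> t) + (of_int (2 * n) * pi) * \<i>"
      using phase[OF t] unfolding exp_eq by blast
    then have "Im (\<i> * of_real (\<theta> t)) = Im (\<i> * of_real (\<phi> t) + (of_int (2 * n) * pi) * \<i>)"
      by simp
    then have "\<theta> t = \<phi> t + 2 * pi * n"
      by simp
    then show ?thesis by simp
  qed
  have "(\<lambda>t. \<theta> t - \<phi> t) constant_on S"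
  proof (rule continuous_discrete_range_constant[OF \<open>connected S\<close>])
    show "continuous_on S (\<lambda>t. \<theta> t - \<phi> t)"
      using assms(2,3) by (intro continuous_intros)
    fix x assume "x \<in> S"
    show "\<exists>e>0. \<forall>y. y \<in> S \<and> \<theta> y - \<phi> y \<noteq> \<theta> x - \<phi> x \<longrightarrow> e \<le> norm (\<theta> y - \<phi> y - (\<theta> x - \<phi> x))"
    proof (intro exI[of _ "2 * pi"] conjI allI impI)
      fix y assume y: "y \<in> S \<and> \<theta> y - \<phi> y \<noteq> \<theta> x - \<phi> x"
      obtain n :: int where n: "\<theta> x - \<phi> x = 2 * pi * n" using multiple \<open>x \<in> S\<close> by blast
      obtain m :: int where m: "\<theta> y - \<phi> y = 2 * pi * m" using multiple y by blast
      have "1 \<le> \<bar>real_of_int m - n\<bar>" using y n m by auto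
      then have "2 * pi \<le> 2 * pi * \<bar>real_of_int m - n\<bar>" by simp
      also have "\<dots> = norm (\<theta> y - \<phi> y - (\<theta> x - \<phi> x))"
        by (simp add: n m abs_mult flip: right_diff_distrib)
      finally show "2 * pi \<le> norm (\<theta> y - \<phi> y - (\<theta> x - \<phi> x))" .
    qed simp
  qed
  then have "\<theta> b - \<phi> b = \<theta> a - \<phi> a"
    using assms(5,6) unfolding constant_on_def by metis
  then show ?thesis
    using assms(7) by simp
qed

lemma sgn_eq_exp_ii_if_polar:
  assumes "w = of_real (norm w) * exp (\<i> * of_real \<alpha>)" "w \<noteq> 0"
  shows "sgn w = exp (\<i> * of_real \<alpha>)"
proof -
  have "of_real (norm w) \<noteq> (0::complex)"
    using assms(2) by simp
  then have "w / of_real (norm w) = exp (\<i> * of_real \<alpha>)"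
    by (subst assms(1)) simp
  then show ?thesis
    by (simp add: sgn_div_norm scaleR_conv_of_real divide_inverse mult.commute)
qed

lemma continuous_phase_eq_add_Arg_quotient:
  fixes F :: "'a::topological_space \<Rightarrow> complex" and \<theta> :: "'a \<Rightarrow> real"
  assumes "connected S" "continuous_on S F" "continuous_on S \<theta>"
    and polar: "\<And>t. t \<in> S \<Longrightarrow> F t = of_real (norm (F t)) * exp (\<i> * of_real (\<theta> t))"
    and slit: "\<And>t. t \<in> S \<Longrightarrow> F t / F a \<notin> \<real>\<^sub>\<le>\<^sub>0"
    and "a \<in> S" "b \<in> S"
  shows "\<theta> b = \<theta> a + Arg (F b / F a)"
proof (rule phase_lifts_eq[OF \<open>connected S\<close> \<open>continuous_on S \<theta>\<close> _ _ \<open>a \<in> S\<close> \<open>b \<in> S\<close>])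
  have Fa: "F a \<noteq> 0"
    using slit[OF \<open>a \<in> S\<close>] by auto
  have F: "F t \<noteq> 0" if "t \<in> S" for t
    using slit[OF that] by auto
  show "continuous_on S (\<lambda>t. \<theta> a + Arg (F t / F a))"
    using assms(2) Fa slit by (intro continuous_intros) auto
  show "\<theta> a = \<theta> a + Arg (F a / F a)"
    using Fa by simp
  fix t assume t: "t \<in> S"
  have quotient: "F t / F a \<noteq> 0"
    using F[OF t] Fa by simp
  have "exp (\<i> * of_real (\<theta> t)) = sgn (F t)"
    using sgn_eq_exp_ii_if_polar[OF polar F, OF t t] by simp
  also have "\<dots> = sgn (F a) * sgn (F t / F a)"
    using Fa by (metis sgn_mult nonzero_mult_div_cancel_left times_divide_eq_right)
  also have "\<dots> = exp (\<i> * of_real (\<theta> a)) * exp (\<i> * of_real (Arg (F t / F a)))"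
    using sgn_eq_exp_ii_if_polar[OF polar F, OF \<open>a \<in> S\<close> \<open>a \<in> S\<close>]
      sgn_eq_exp_ii_if_polar[OF Arg_eq[OF quotient] quotient] by (simp only:)
  finally show "exp (\<i> * of_real (\<theta> t)) = exp (\<i> * of_real (\<theta> a + Arg (F t / F a)))"
    by (simp add: distrib_left exp_add)
qed

lemma charf_add_eq_Phi_mult:
  fixes A :: "complex^'n^'n"
  assumes "charf A z \<noteq> 0"
  shows "charf A (z + s) = Phi A z s * charf A z"
proof -
  let ?M = "mat z - A"
  have "invertible ?M"
    using assms by (simp add: charf_def invertible_det_nz)
  then have "?M ** resolvent A z = mat 1 \<and> resolvent A z ** ?M = mat 1"
    unfolding resolvent_def matrix_inv_def invertible_def by (rule someI_ex)
  then have "(mat 1 + mat s ** resolvent A z) ** ?M = mat (z + s) - A"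
    by (simp add: matrix_add_rdistrib matrix_mul_assoc[symmetric] mat_add)
  then show ?thesis
    unfolding charf_def Phi_def by (metis det_mul)
qed

lemma charf_closed_segment:
  fixes A :: "complex^'n^'n"
  assumes "charf A z \<noteq> 0" "w \<in> closed_segment z (z + h)"
  obtains u :: real where "u \<in> {0..1}" "charf A w = Phi A z (of_real u * h) * charf A z"
proof -
  obtain u where "u \<in> {0..1}" "w = (1 - u) *\<^sub>R z + u *\<^sub>R (z + h)"
    using assms(2) unfolding closed_segment_def by auto
  moreover from this have "w = z + of_real u * h"
    by (simp add: scaleR_conv_of_real algebra_simps)
  ultimately show ?thesis
    using that charf_add_eq_Phi_mult[OF assms(1), of "of_real u * h"] by simp
qed

lemma continuous_on_charf: "continuous_on S (charf (A::complex^'n^'n))"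
proof -
  have "continuous_on S (\<lambda>w. (mat w - A) $ i $ j)" for i j
    by (cases "i = j") (auto simp: mat_def intro!: continuous_intros)
  then show ?thesis
    unfolding charf_def det_def
    by (intro continuous_on_sum continuous_on_mult[OF continuous_on_const] continuous_on_prod)
qed

lemma charf_quotient_closed_segment_not_nonpos_Reals:
  fixes A :: "complex^'n^'n"
  assumes "charf A w \<noteq> 0" "charf A z \<noteq> 0" "w \<in> closed_segment z (z + h)"
    and "\<forall>t\<in>{0..1::real}. \<bar>Arg (Phi A z (of_real t * h))\<bar> < pi"
  shows "charf A w / charf A z \<notin> \<real>\<^sub>\<le>\<^sub>0"
proof -
  obtain u where u: "u \<in> {0..1}" "charf A w = Phi A z (of_real u * h) * charf A z"
    using charf_closed_segment[OF assms(2,3)] .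
  then have "charf A w / charf A z = Phi A z (of_real u * h)"
    using assms(2) by simp
  then show ?thesis
    using not_nonpos_Reals_if_abs_Arg_less_pi assms(1,4) u by auto
qed

theorem lemma1:
  fixes A :: "complex^'n^'n" and g :: "real \<Rightarrow> complex" and \<theta> :: "real \<Rightarrow> real"
    and z h :: complex and a b :: real
  assumes "valid_path g" and "simple_path g" and "pathfinish g = pathstart g"
    and "\<forall>w\<in>path_image g. det (mat w - A) \<noteq> 0"
    and "is_arg0 A g \<theta>"
    and "a \<in> {0..1}" and "b \<in> {0..1}" and "g a = z" and "g b = z + h"
    and "g ` {min a b..max a b} = closed_segment z (z + h)"
    and "\<forall>t\<in>{0..1::real}. \<bar>Arg (Phi A z (of_real t * h))\<bar> < pi"
  shows "\<theta> b = \<theta> a + Arg (Phi A z h)"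
proof -
  \<comment> \<open>Only the arc of g over the segment matters.\<close>
  define I where "I = {min a b..max a b}"
  have I: "I \<subseteq> {0..1}" "a \<in> I" "b \<in> I"
    using assms(6,7) by (auto simp: I_def)
  have nonzero: "charf A (g t) \<noteq> 0" if "t \<in> {0..1}" for t
    using assms(4) that by (auto simp: charf_def path_image_def)
  then have fz: "charf A z \<noteq> 0"
    using assms(6,8) by blast
  have slit: "charf A (g t) / charf A (g a) \<notin> \<real>\<^sub>\<le>\<^sub>0" if "t \<in> I" for t
  proof -
    have "t \<in> {0..1}" "g t \<in> closed_segment z (z + h)"
      using that I(1) assms(10) unfolding I_def by auto
    then show ?thesis
      using charf_quotient_closed_segment_not_nonpos_Reals[OF nonzero fz _ assms(11)] assms(8) by simp
  qed
  have "continuous_on I (charf A \<circ> g)"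
    using continuous_on_subset[OF valid_path_imp_path[OF assms(1), unfolded path_def] I(1)]
    by (rule continuous_on_compose) (rule continuous_on_charf)
  moreover have "continuous_on I \<theta>"
    using assms(5) I(1) continuous_on_subset unfolding is_arg0_def by blast
  moreover have "(charf A \<circ> g) t = of_real (norm ((charf A \<circ> g) t)) * exp (\<i> * of_real (\<theta> t))"
    if "t \<in> I" for t
    using assms(5) that I(1) unfolding is_arg0_def by auto
  ultimately have "\<theta> b = \<theta> a + Arg (charf A (g b) / charf A (g a))"
    using continuous_phase_eq_add_Arg_quotient[of I "charf A \<circ> g" \<theta> a b] I slit
    by (simp add: I_def)
  then show ?thesis
    using charf_add_eq_Phi_mult[OF fz, of h] fz assms(8,9) by simp
qed

end
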